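(* Let $a\in BC(\mathbf{R})$, $a\ge0$, with $a(x)\ge\varepsilon_1>0$ for $|x|\ge L$ ($L>0$), and let $V\in BC^1(\mathbf{R})$ with $V>0$ and $V'(x)x\le0$ on $\mathbf{R}$. Let $\phi(x)=\varepsilon_1$ for $|x|\le L$, $\phi(x)=L\varepsilon_1/|x|$ for $|x|\ge L$, $\alpha=\varepsilon_1/4$, and for $k>0$ and a solution $u$ define \[G_k(t):=\int_{\mathbf{R}}u_t\,\phi(x)\,x\,u_x\,dx+\alpha(u_t(t,\cdot),u(t,\cdot))+\frac{\alpha}{2}\int_{\mathbf{R}}a(x)|u(t,x)|^2dx+kE_u(t).\] Then there is a constant $C^*>0$ depending only on $L$ such that, if $V(0)<1/(4C^* )$, then for all sufficiently large $k\ge2$ there exist constants $\eta_0>0$ and $C>0$ such that for every $[u_0,u_1]\in C_0^\infty(\mathbf{R})\times C_0^\infty(\mathbf{R})$ the corresponding smooth solution $u$ of $u_{tt}-u_{xx}+V(x)u+a(x)u_t=0$, $u(0)=u_0$, $u_t(0)=u_1$ satisfies \[G_k(t)+\eta_0\int_0^tE_u(s)\,ds\le C\Big(\|u_0\|_{H^1}^2+\|u_1\|^2+\int_0^t\!\!\int_{\mathbf{R}}a(x)|u(s,x)|^2dx\,ds\Big)\quad(t\ge0).\]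
   Context: $\|\cdot\|$ and $(\cdot,\cdot)$ denote the $L^2(\mathbf{R})$ norm and inner product. $E_u(t)=\frac12(\|u_t\|^2+\|u_x\|^2+\|\sqrt V u\|^2)$. $BC$, $BC^1$ denote bounded continuous functions and $C^1$ functions with bounded continuous derivative. *)

theory Defs
  imports "HOL-Analysis.Analysis"
begin

definition L2sq :: "(real \<Rightarrow> real) \<Rightarrow> real" where
  "L2sq f = (LINT x|lborel. (f x)^2)"

definition L2inner :: "(real \<Rightarrow> real) \<Rightarrow> (real \<Rightarrow> real) \<Rightarrow> real" where
  "L2inner f g = (LINT x|lborel. f x * g x)"

definition smooth_compact :: "(real \<Rightarrow> real) \<Rightarrow> bool" where
  "smooth_compact f \<longleftrightarrow>
     (\<forall>n x. ((deriv ^^ n) f) differentiable (at x)) \<and>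
     (\<exists>R. \<forall>x. \<bar>x\<bar> > R \<longrightarrow> f x = 0)"

definition BC :: "(real \<Rightarrow> real) \<Rightarrow> bool" where
  "BC f \<longleftrightarrow> continuous_on UNIV f \<and> bounded (range f)"

definition BC1 :: "(real \<Rightarrow> real) \<Rightarrow> bool" where
  "BC1 f \<longleftrightarrow> f differentiable_on UNIV \<and> BC f \<and> BC (deriv f)"

definition phi :: "real \<Rightarrow> real \<Rightarrow> real \<Rightarrow> real" where
  "phi L \<epsilon>1 x = (if \<bar>x\<bar> \<le> L then \<epsilon>1 else L * \<epsilon>1 / \<bar>x\<bar>)"

definition is_solution ::
  "(real \<Rightarrow> real) \<Rightarrow> (real \<Rightarrow> real) \<Rightarrow> (real \<Rightarrow> real) \<Rightarrow> (real \<Rightarrow> real) \<Rightarrow>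
   (real \<Rightarrow> real \<Rightarrow> real) \<Rightarrow> (real \<Rightarrow> real \<Rightarrow> real) \<Rightarrow> (real \<Rightarrow> real \<Rightarrow> real) \<Rightarrow> bool" where
  "is_solution V a u0 u1 u ut ux \<longleftrightarrow>
     (\<exists>utt utx uxt uxx.
       (\<forall>t x. ((\<lambda>s. u s x) has_real_derivative ut t x) (at t)) \<and>
       (\<forall>t x. ((\<lambda>y. u t y) has_real_derivative ux t x) (at x)) \<and>
       (\<forall>t x. ((\<lambda>s. ut s x) has_real_derivative utt t x) (at t)) \<and>
       (\<forall>t x. ((\<lambda>y. ut t y) has_real_derivative utx t x) (at x)) \<and>
       (\<forall>t x. ((\<lambda>s. ux s x) has_real_derivative uxt t x) (at t)) \<and>
       (\<forall>t x. ((\<lambda>y. ux t y) has_real_derivative uxx t x) (at x)) \<and>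
       continuous_on UNIV (\<lambda>(t,x). u t x) \<and>
       continuous_on UNIV (\<lambda>(t,x). ut t x) \<and>
       continuous_on UNIV (\<lambda>(t,x). ux t x) \<and>
       continuous_on UNIV (\<lambda>(t,x). utt t x) \<and>
       continuous_on UNIV (\<lambda>(t,x). utx t x) \<and>
       continuous_on UNIV (\<lambda>(t,x). uxt t x) \<and>
       continuous_on UNIV (\<lambda>(t,x). uxx t x) \<and>
       (\<forall>t x. utt t x - uxx t x + V x * u t x + a x * ut t x = 0) \<and>
       (\<forall>x. u 0 x = u0 x) \<and> (\<forall>x. ut 0 x = u1 x) \<and>
       (\<forall>t\<ge>0. \<exists>R. \<forall>x. \<bar>x\<bar> > R \<longrightarrow> u t x = 0))"

definition energy :: "(real \<Rightarrow> real) \<Rightarrow> (real \<Rightarrow> real \<Rightarrow> real) \<Rightarrow> (real \<Rightarrow> real \<Rightarrow> real) \<Rightarrow>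
    (real \<Rightarrow> real \<Rightarrow> real) \<Rightarrow> real \<Rightarrow> real" where
  "energy V u ut ux t =
     (L2sq (ut t) + L2sq (ux t) + L2sq (\<lambda>x. sqrt (V x) * u t x)) / 2"

definition Gk :: "real \<Rightarrow> real \<Rightarrow> (real \<Rightarrow> real) \<Rightarrow> (real \<Rightarrow> real) \<Rightarrow> real \<Rightarrow>
    (real \<Rightarrow> real \<Rightarrow> real) \<Rightarrow> (real \<Rightarrow> real \<Rightarrow> real) \<Rightarrow> (real \<Rightarrow> real \<Rightarrow> real) \<Rightarrow> real \<Rightarrow> real" where
  "Gk L \<epsilon>1 a V k u ut ux t =
     (let \<alpha> = \<epsilon>1 / 4 in
       (LINT x|lborel. ut t x * phi L \<epsilon>1 x * x * ux t x)
       + \<alpha> * L2inner (ut t) (u t)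
       + \<alpha> / 2 * (LINT x|lborel. a x * (u t x)^2)
       + k * energy V u ut ux t)"

end

theory Submission
  imports Defs
begin

text \<open>
  Write \<open>\<psi>(x) = \<phi>(x) x\<close>. Then \<open>|\<psi>| \<le> L \<epsilon>\<^sub>1\<close>, and \<open>\<psi>' = \<epsilon>\<^sub>1\<close> on \<open>|x| < L\<close> while \<open>\<psi>' = 0\<close> on
  \<open>|x| > L\<close>, exactly where the damping satisfies \<open>a \<ge> \<epsilon>\<^sub>1\<close>. Using the equation, the density of
  \<open>G\<^sub>k\<close> satisfies \<open>\<partial>\<^sub>t D \<le> \<partial>\<^sub>x F - (\<epsilon>\<^sub>1/16) e\<close>, where \<open>e = u\<^sub>t\<^sup>2 + u\<^sub>x\<^sup>2 + V u\<^sup>2\<close> and \<open>F\<close> is an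
  explicit flux: the cross term \<open>\<psi> V u u\<^sub>x\<close> is absorbed because \<open>V \<le> V(0) < 1/(16 L\<^sup>2)\<close>
  (\<open>V'(x) x \<le> 0\<close> makes \<open>V\<close> maximal at \<open>0\<close>), and the cross term \<open>\<psi> a u\<^sub>t u\<^sub>x\<close> by the damping
  term \<open>k a u\<^sub>t\<^sup>2\<close> once \<open>k \<ge> 4 L\<^sup>2 \<epsilon>\<^sub>1 sup a + 1\<close>. By finite speed of propagation the
  solution stays supported in \<open>|x| \<le> R\<^sub>0 + t\<close>, so the flux integrates to zero, and
  \<open>G\<^sub>k(t) + (\<epsilon>\<^sub>1/8) \<integral>\<^sub>0\<^sup>t E \<le> G\<^sub>k(0)\<close>, which is bounded by the initial norms. This gives the
  claim with \<open>C\<^sup>* = 4 L\<^sup>2\<close> and \<open>\<eta>\<^sub>0 = \<epsilon>\<^sub>1/8\<close>, even without the \<open>a |u|\<^sup>2\<close> term on the right.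
\<close>

lemma continuous_on_compose_curried:
  fixes F :: "'a::topological_space \<Rightarrow> 'b::topological_space \<Rightarrow> 'c::topological_space"
  assumes "continuous_on UNIV (\<lambda>(t,x). F t x)" "continuous_on S f" "continuous_on S g"
  shows "continuous_on S (\<lambda>p. F (f p) (g p))"
  using continuous_on_compose[of S "\<lambda>p. (f p, g p)" "\<lambda>(t,x). F t x"] assms
  by (auto intro: continuous_on_subset continuous_intros simp: o_def)

lemma continuous_on_slice:
  fixes F :: "'a::topological_space \<Rightarrow> 'b::topological_space \<Rightarrow> 'c::topological_space"
  assumes "continuous_on UNIV (\<lambda>(t,x). F t x)"
  shows "continuous_on S (F t)"
  using continuous_on_compose_curried[OF assms, of S "\<lambda>_. t" "\<lambda>x. x"] by simp

lemma has_integral_integral_continuous: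
  fixes f :: "real \<Rightarrow> real"
  assumes "continuous_on UNIV f"
  shows "(f has_integral integral {c..d} f) {c..d}"
  using assms
  by (intro integrable_integral integrable_continuous_real) (auto intro: continuous_on_subset)

lemma lebesgue_integral_eq_integral_if_vanishing:
  fixes f :: "real \<Rightarrow> real"
  assumes "continuous_on UNIV f" and vanish: "\<And>x. R \<le> \<bar>x\<bar> \<Longrightarrow> f x = 0"
  shows "(LINT x|lborel. f x) = integral {-R..R} f"
proof -
  have "f x = indicator {-R..R} x *\<^sub>R f x" for x
    using vanish[of x] by (cases "R \<le> \<bar>x\<bar>") (auto simp: indicator_def abs_le_iff)
  then have "(LINT x|lborel. f x) = (LINT x:{-R..R}|lborel. f x)"
    unfolding set_lebesgue_integral_def by presburger
  also have "\<dots> = integral {-R..R} f"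
  proof (rule set_borel_integral_eq_integral(2))
    show "set_integrable lborel {-R..R} f"
      unfolding set_integrable_def
      by (rule borel_integrable_compact) (auto intro: continuous_on_subset[OF assms(1)])
  qed
  finally show ?thesis .
qed

lemma integral_le_by_vanishing_flux:
  fixes h g Fl Fl' :: "real \<Rightarrow> real"
  assumes "a \<le> b" and "finite S"
    and "continuous_on {a..b} h" "continuous_on {a..b} g" "continuous_on {a..b} Fl"
    and Fl_deriv: "\<And>x. x \<in> {a<..<b} - S \<Longrightarrow> (Fl has_real_derivative Fl' x) (at x)"
    and "Fl a = 0" "Fl b = 0"
    and h_le: "\<And>x. x \<in> {a<..<b} - S \<Longrightarrow> h x \<le> Fl' x + g x"
  shows "integral {a..b} h \<le> integral {a..b} g"
proof -
  have "(Fl' has_integral Fl b - Fl a) {a..b}"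
    using Fl_deriv assms(5)
    by (intro fundamental_theorem_of_calculus_interior_strong[OF \<open>finite S\<close> \<open>a \<le> b\<close>])
      (auto simp: has_real_derivative_iff_has_vector_derivative[symmetric])
  then have flux_integral: "(Fl' has_integral 0) {a..b}"
    using \<open>Fl a = 0\<close> \<open>Fl b = 0\<close> by simp
  have "(g has_integral integral {a..b} g) {a..b}"
    using assms(4) by (intro integrable_integral integrable_continuous_real)
  from has_integral_add[OF flux_integral this]
  have "((\<lambda>x. Fl' x + g x) has_integral integral {a..b} g) {a..b}"
    by simp
  then have spiked: "((\<lambda>x. if x \<in> S \<union> {a,b} then h x else Fl' x + g x)
      has_integral integral {a..b} g) {a..b}"
    by (rule has_integral_spike_finite[of "S \<union> {a,b}", rotated 2]) (use \<open>finite S\<close> in auto)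
  have "(h has_integral integral {a..b} h) {a..b}"
    using assms(3) by (intro integrable_integral integrable_continuous_real)
  then show ?thesis
    by (rule has_integral_le[OF _ spiked]) (simp add: h_le)
qed

lemma integral_increment_le_by_flux:
  fixes f ft g Fl Fl' :: "real \<Rightarrow> real \<Rightarrow> real"
  assumes "T0 \<le> T1" and "a \<le> b" and "finite S"
    and f_deriv: "\<And>\<tau> x. ((\<lambda>\<tau>. f \<tau> x) has_real_derivative ft \<tau> x) (at \<tau>)"
    and cont_f: "continuous_on UNIV (\<lambda>(\<tau>,x). f \<tau> x)"
    and cont_ft: "continuous_on UNIV (\<lambda>(\<tau>,x). ft \<tau> x)"
    and cont_g: "continuous_on UNIV (\<lambda>(\<tau>,x). g \<tau> x)"
    and Fl_deriv: "\<And>\<tau> x. \<tau> \<in> {T0..T1} \<Longrightarrow> x \<in> {a<..<b} - S \<Longrightarrow>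
      (Fl \<tau> has_real_derivative Fl' \<tau> x) (at x)"
    and cont_Fl: "\<And>\<tau>. \<tau> \<in> {T0..T1} \<Longrightarrow> continuous_on {a..b} (Fl \<tau>)"
    and Fl_boundary: "\<And>\<tau>. \<tau> \<in> {T0..T1} \<Longrightarrow> Fl \<tau> a = 0 \<and> Fl \<tau> b = 0"
    and ft_le: "\<And>\<tau> x. \<tau> \<in> {T0..T1} \<Longrightarrow> x \<in> {a<..<b} - S \<Longrightarrow> ft \<tau> x \<le> Fl' \<tau> x + g \<tau> x"
  shows "integral {a..b} (f T1) - integral {a..b} (f T0)
    \<le> integral {T0..T1} (\<lambda>\<tau>. integral {a..b} (g \<tau>))"
proof -
  define Fi where "Fi \<tau> = integral {a..b} (f \<tau>)" for \<tau>
  define Gi where "Gi \<tau> = integral {a..b} (g \<tau>)" for \<tau>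
  have cont_Gi: "continuous_on UNIV Gi"
    unfolding Gi_def using integral_continuous_on_param[of UNIV a b g] cont_g
    by (simp add: cbox_interval continuous_on_subset)
  have Fi_deriv: "(Fi has_real_derivative integral {a..b} (ft \<tau>)) (at \<tau>)" for \<tau>
  proof -
    have "((\<lambda>\<tau>. integral (cbox a b) (f \<tau>)) has_field_derivative integral (cbox a b) (ft \<tau>))
        (at \<tau> within UNIV)"
      by (rule leibniz_rule_field_derivative[of UNIV a b f ft])
        (auto intro!: integrable_continuous_real continuous_on_slice[OF cont_f]
          continuous_on_subset[OF cont_ft] f_deriv simp: cbox_interval)
    then show ?thesis
      by (simp add: Fi_def[abs_def] cbox_interval)
  qed
  define H where "H \<tau> = Fi \<tau> - integral {T0..\<tau>} Gi" for \<tau>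
  have "H T1 \<le> H T0"
  proof (rule DERIV_nonpos_imp_decreasing_open[OF \<open>T0 \<le> T1\<close>])
    fix \<tau> assume \<tau>: "T0 < \<tau>" "\<tau> < T1"
    have "((\<lambda>s. integral {T0..s} Gi) has_real_derivative Gi \<tau>) (at \<tau>)"
      using integral_has_real_derivative[OF continuous_on_subset[OF cont_Gi], of T0 T1 \<tau>] \<tau>
        at_within_interior[of \<tau> "{T0..T1}"] by auto
    then have "(H has_real_derivative integral {a..b} (ft \<tau>) - Gi \<tau>) (at \<tau>)"
      unfolding H_def by (intro DERIV_diff Fi_deriv)
    moreover have "integral {a..b} (ft \<tau>) \<le> Gi \<tau>"
      unfolding Gi_def
      by (rule integral_le_by_vanishing_flux[OF \<open>a \<le> b\<close> \<open>finite S\<close>, where Fl="Fl \<tau>" and Fl'="Fl' \<tau>"])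
        (use \<tau> Fl_deriv cont_Fl Fl_boundary ft_le in
          \<open>auto intro: continuous_on_slice[OF cont_ft] continuous_on_slice[OF cont_g]\<close>)
    ultimately show "\<exists>y. (H has_real_derivative y) (at \<tau>) \<and> y \<le> 0"
      by auto
  next
    have "continuous_on {T0..T1} Fi"
      by (meson DERIV_continuous continuous_at_imp_continuous_on Fi_deriv)
    moreover have "continuous_on {T0..T1} (\<lambda>s. integral {T0..s} Gi)"
      by (intro indefinite_integral_continuous_1 integrable_continuous_real
          continuous_on_subset[OF cont_Gi]) auto
    ultimately show "continuous_on {T0..T1} H"
      unfolding H_def by (intro continuous_intros)
  qed
  then show ?thesis
    using \<open>T0 \<le> T1\<close> by (simp add: H_def Fi_def Gi_def[abs_def])
qed

lemma has_real_derivative_max_0_square: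
  "((\<lambda>z::real. (max z 0)^2) has_real_derivative 2 * max z 0) (at z)"
proof (cases z "0::real" rule: linorder_cases)
  case less
  have "((\<lambda>_. 0) has_real_derivative 0) (at z)" by simp
  then have "((\<lambda>z::real. (max z 0)^2) has_real_derivative 0) (at z)"
    by (rule has_field_derivative_transform_within_open[where S="{..<0}"]) (use less in auto)
  then show ?thesis using less by simp
next
  case equal
  have "((\<lambda>y. (max y 0)^2 / y) \<longlongrightarrow> 0) (at (0::real))"
  proof (rule Lim_null_comparison)
    show "\<forall>\<^sub>F y in at 0. norm ((max y 0)^2 / y) \<le> \<bar>y\<bar>"
      by (intro always_eventually allI) (auto simp: max_def power2_eq_square abs_mult)
    show "((\<lambda>y::real. \<bar>y\<bar>) \<longlongrightarrow> 0) (at 0)"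
      using tendsto_rabs[OF tendsto_ident_at[of 0 UNIV]] by simp
  qed
  then show ?thesis using equal by (simp add: has_field_derivative_iff)
next
  case greater
  have "((\<lambda>z. z^2) has_real_derivative 2 * z) (at z)"
    by (auto intro!: derivative_eq_intros)
  then have "((\<lambda>z::real. (max z 0)^2) has_real_derivative 2 * z) (at z)"
    by (rule has_field_derivative_transform_within_open[where S="{0<..}"]) (use greater in auto)
  then show ?thesis using greater by simp
qed

lemma has_real_derivative_abs_diff:
  fixes x m :: real
  assumes "x \<noteq> m"
  shows "((\<lambda>x. \<bar>x - m\<bar>) has_real_derivative sgn (x - m)) (at x)"
proof (cases "m < x")
  case True
  have "((\<lambda>x. x - m) has_real_derivative 1) (at x)"
    by (auto intro!: derivative_eq_intros)
  then have "((\<lambda>x. \<bar>x - m\<bar>) has_real_derivative 1) (at x)"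
    by (rule has_field_derivative_transform_within_open[where S="{m<..}"]) (use True in auto)
  then show ?thesis using True by simp
next
  case False
  have "((\<lambda>x. m - x) has_real_derivative -1) (at x)"
    by (auto intro!: derivative_eq_intros)
  then have "((\<lambda>x. \<bar>x - m\<bar>) has_real_derivative -1) (at x)"
    by (rule has_field_derivative_transform_within_open[where S="{..<m}"]) (use False assms in auto)
  then show ?thesis using False assms by simp
qed

definition cone_weight :: "real \<Rightarrow> real \<Rightarrow> real \<Rightarrow> real \<Rightarrow> real" where
  "cone_weight r m \<tau> x = (max (r - \<tau> - \<bar>x - m\<bar>) 0)^2"

lemma cone_weight_nonneg: "0 \<le> cone_weight r m \<tau> x"
  by (simp add: cone_weight_def)

lemma continuous_on_cone_weight [continuous_intros]:
  "continuous_on S f \<Longrightarrow> continuous_on S g \<Longrightarrow> continuous_on S (\<lambda>p. cone_weight r m (f p) (g p))"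
  unfolding cone_weight_def by (intro continuous_intros)

lemma cone_weight_has_derivative_time:
  "((\<lambda>\<tau>. cone_weight r m \<tau> x) has_real_derivative - (2 * max (r - \<tau> - \<bar>x - m\<bar>) 0)) (at \<tau>)"
proof -
  have "((\<lambda>\<tau>. cone_weight r m \<tau> x) has_real_derivative
      2 * max (r - \<tau> - \<bar>x - m\<bar>) 0 * (0 - 1 - 0)) (at \<tau>)"
    unfolding cone_weight_def
    by (rule DERIV_chain2[OF has_real_derivative_max_0_square])
      (intro DERIV_diff DERIV_const DERIV_ident)
  then show ?thesis
    by simp
qed

lemma cone_weight_has_derivative_space:
  assumes "x \<noteq> m"
  shows "(cone_weight r m \<tau> has_real_derivative - (2 * max (r - \<tau> - \<bar>x - m\<bar>) 0 * sgn (x - m))) (at x)"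
proof -
  have "(cone_weight r m \<tau> has_real_derivative 2 * max (r - \<tau> - \<bar>x - m\<bar>) 0 * (0 - 0 - sgn (x - m)))
      (at x)"
    unfolding cone_weight_def[abs_def]
    by (rule DERIV_chain2[OF has_real_derivative_max_0_square])
      (intro DERIV_diff DERIV_const has_real_derivative_abs_diff assms)
  then show ?thesis
    by simp
qed

lemma le_value_at_0_if_deriv_mult_nonpos:
  fixes V V' :: "real \<Rightarrow> real"
  assumes V_deriv: "\<And>x. (V has_real_derivative V' x) (at x)" and sign: "\<And>x. V' x * x \<le> 0"
  shows "V x \<le> V 0"
proof -
  have cont: "continuous_on S V" for S
    by (meson DERIV_continuous continuous_at_imp_continuous_on V_deriv)
  show ?thesis
  proof (cases "0 \<le> x")
    case True
    have "V' y \<le> 0" if "y > 0" for y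
      using sign[of y] that by (simp add: mult_le_0_iff)
    then show ?thesis
      using DERIV_nonpos_imp_decreasing_open[OF True, of V] V_deriv cont by blast
  next
    case False
    have "V' y \<ge> 0" if "y < 0" for y
      using sign[of y] that by (simp add: mult_le_0_iff)
    then show ?thesis
      using DERIV_nonneg_imp_increasing_open[of x 0 V] False V_deriv cont by force
  qed
qed

lemma mixed_partials_eq:
  fixes u ut ux utx uxt :: "real \<Rightarrow> real \<Rightarrow> real"
  assumes ut: "\<And>t x. ((\<lambda>s. u s x) has_real_derivative ut t x) (at t)"
    and ux: "\<And>t x. ((\<lambda>y. u t y) has_real_derivative ux t x) (at x)"
    and utx: "\<And>t x. ((\<lambda>y. ut t y) has_real_derivative utx t x) (at x)"
    and uxt: "\<And>t x. ((\<lambda>s. ux s x) has_real_derivative uxt t x) (at t)"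
    and cont_ux: "continuous_on UNIV (\<lambda>(t,x). ux t x)"
    and cont_uxt: "continuous_on UNIV (\<lambda>(t,x). uxt t x)"
  shows "utx t y = uxt t y"
proof -
  define x0 where "x0 = y - 1"
  have integral_uxt: "integral {x0..z} (uxt t) = ut t z - ut t x0" if z: "x0 \<le> z" for z
  proof -
    have "(ux \<tau> has_integral u \<tau> z - u \<tau> x0) {x0..z}" for \<tau>
      by (rule fundamental_theorem_of_calculus[OF z])
        (auto simp: has_real_derivative_iff_has_vector_derivative[symmetric] intro!: DERIV_subset[OF ux])
    then have "integral {x0..z} (ux \<tau>) = u \<tau> z - u \<tau> x0" for \<tau>
      by (rule integral_unique)
    then have "((\<lambda>\<tau>. integral {x0..z} (ux \<tau>)) has_real_derivative ut t z - ut t x0) (at t)"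
      by (simp only:) (intro DERIV_diff ut)
    moreover have "((\<lambda>\<tau>. integral (cbox x0 z) (ux \<tau>)) has_field_derivative integral (cbox x0 z) (uxt t))
        (at t within UNIV)"
      by (rule leibniz_rule_field_derivative[of UNIV x0 z ux uxt])
        (auto intro!: integrable_continuous_real continuous_on_slice[OF cont_ux]
          continuous_on_subset[OF cont_uxt] uxt)
    ultimately show ?thesis
      using DERIV_unique by (fastforce simp: cbox_interval)
  qed
  have y: "y \<in> interior {x0..y+1}"
    by (auto simp: x0_def)
  have "((\<lambda>z. integral {x0..z} (uxt t)) has_real_derivative uxt t y) (at y within {x0..y+1})"
    by (rule integral_has_real_derivative) (auto simp: x0_def intro!: continuous_on_slice[OF cont_uxt])
  then have "((\<lambda>z. ut t z - ut t x0) has_real_derivative uxt t y) (at y within {x0..y+1})"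
    by (rule has_field_derivative_transform_within[where d=1])
      (auto simp: x0_def intro!: integral_uxt[unfolded x0_def])
  then have "((\<lambda>z. ut t z - ut t x0) has_real_derivative uxt t y) (at y)"
    by (simp add: at_within_interior[OF y])
  moreover have "((\<lambda>z. ut t z - ut t x0) has_real_derivative utx t y) (at y)"
    by (auto intro!: derivative_eq_intros utx)
  ultimately show ?thesis
    by (rule DERIV_unique[symmetric])
qed

section \<open>Pointwise inequalities\<close>

lemma mult_le_young:
  fixes x y c :: real
  assumes "0 < c"
  shows "x * y \<le> c/2 * x^2 + y^2 / (2 * c)"
proof -
  have "0 \<le> (c * x - y)^2 / (2 * c)"
    using assms by simp
  then show ?thesis
    using assms by (simp add: power2_eq_square field_simps)
qed

lemma potential_cross_term_le:
  fixes u ux psi v e1 L Vmax :: real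
  assumes psi: "\<bar>psi\<bar> \<le> L * e1" and v: "0 < v" "v \<le> Vmax" and small_V: "16 * L^2 * Vmax < 1"
    and e1: "0 < e1"
  shows "- psi * v * u * ux \<le> e1/8 * v * u^2 + e1/8 * ux^2"
proof -
  have "- psi * v * u * ux \<le> \<bar>psi\<bar> * (v * \<bar>u\<bar> * \<bar>ux\<bar>)"
    using abs_ge_minus_self[of "psi * v * u * ux"] v by (simp add: abs_mult mult.assoc)
  also have "\<dots> \<le> L * e1 * (v * \<bar>u\<bar> * \<bar>ux\<bar>)"
    using psi v by (intro mult_right_mono) auto
  also have "\<dots> = e1 * v * (\<bar>u\<bar> * (L * \<bar>ux\<bar>))"
    by (simp add: algebra_simps)
  also have "\<dots> \<le> e1 * v * ((1/4)/2 * \<bar>u\<bar>^2 + (L * \<bar>ux\<bar>)^2 / (2 * (1/4)))"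
    using e1 v by (intro mult_left_mono mult_le_young) auto
  also have "\<dots> = e1/8 * v * u^2 + 2 * L^2 * e1 * v * ux^2"
    by (simp add: power_mult_distrib algebra_simps)
  also have "2 * L^2 * e1 * v * ux^2 \<le> e1/8 * ux^2"
    using mult_right_mono[of "16 * L^2 * v" 1 "e1 * ux^2"] mult_left_mono[of v Vmax "16 * L^2"]
      small_V v e1
    by simp
  finally show ?thesis
    by simp
qed

lemma damping_cross_term_le:
  fixes ut ux psi a e1 L A :: real
  assumes psi: "\<bar>psi\<bar> \<le> L * e1" and a: "0 \<le> a" "a \<le> A" and e1: "0 < e1"
  shows "- psi * a * ut * ux \<le> e1/16 * ux^2 + 4 * L^2 * e1 * A * a * ut^2"
proof -
  have "- psi * a * ut * ux \<le> \<bar>psi\<bar> * (a * \<bar>ut\<bar> * \<bar>ux\<bar>)"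
    using abs_ge_minus_self[of "psi * a * ut * ux"] a by (simp add: abs_mult mult.assoc)
  also have "\<dots> \<le> L * e1 * (a * \<bar>ut\<bar> * \<bar>ux\<bar>)"
    using psi a by (intro mult_right_mono) auto
  also have "\<dots> = e1 * (\<bar>ux\<bar> * (L * a * \<bar>ut\<bar>))"
    by (simp add: algebra_simps)
  also have "\<dots> \<le> e1 * ((1/8)/2 * \<bar>ux\<bar>^2 + (L * a * \<bar>ut\<bar>)^2 / (2 * (1/8)))"
    using e1 by (intro mult_left_mono mult_le_young) auto
  also have "\<dots> = e1/16 * ux^2 + 4 * L^2 * e1 * a^2 * ut^2"
    by (simp add: power_mult_distrib algebra_simps)
  also have "4 * L^2 * e1 * a^2 * ut^2 \<le> 4 * L^2 * e1 * A * a * ut^2"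
  proof -
    have "a^2 \<le> A * a"
      using mult_right_mono[OF a(2) a(1)] by (simp add: power2_eq_square)
    then have "(4 * L^2 * e1 * ut^2) * a^2 \<le> (4 * L^2 * e1 * ut^2) * (A * a)"
      using e1 by (intro mult_left_mono) auto
    then show ?thesis
      by (simp add: algebra_simps)
  qed
  finally show ?thesis
    by simp
qed

text \<open>
  Read \<open>ut, ux, u, psi, dpsi, a, v\<close> as the values of \<open>u\<^sub>t, u\<^sub>x, u, \<psi>, \<psi>', a, V\<close> at one point;
  the left-hand side is then \<open>\<partial>\<^sub>t D - \<partial>\<^sub>x F\<close> for the density \<open>D\<close> of \<open>G\<^sub>k\<close>.
\<close>

lemma dissipation_pointwise:
  fixes ut ux u psi dpsi a v e1 L A Vmax k :: real
  assumes psi: "\<bar>psi\<bar> \<le> L * e1" and v: "0 < v" "v \<le> Vmax" and small_V: "16 * L^2 * Vmax < 1"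
    and a: "0 \<le> a" "a \<le> A" and k: "4 * L^2 * e1 * A + 1 \<le> k" and e1: "0 < e1"
    and dpsi: "dpsi = e1 \<or> (dpsi = 0 \<and> e1 \<le> a)"
  shows "- dpsi * (ux^2 + ut^2) / 2 - psi * v * u * ux - psi * a * ut * ux
      - e1/4 * v * u^2 + e1/4 * ut^2 - e1/4 * ux^2 - k * a * ut^2
    \<le> - e1/16 * (ut^2 + ux^2 + v * u^2)"
proof -
  note cross_V = potential_cross_term_le[OF psi v small_V e1, of u ux]
  note cross_a = damping_cross_term_le[OF psi a e1, of ut ux]
  have damping: "4 * L^2 * e1 * A * a * ut^2 + a * ut^2 \<le> k * a * ut^2"
    using mult_right_mono[OF k, of "a * ut^2"] a by (simp add: algebra_simps)
  \<comment> \<open>Naming the monomials turns the remaining step into linear arithmetic.\<close>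
  define D X Y Z M K P Q W where "D = dpsi * (ux^2 + ut^2)"
    and "X = psi * v * u * ux" and "Y = psi * a * ut * ux"
    and "Z = a * ut^2" and "M = L^2 * e1 * A * a * ut^2" and "K = k * a * ut^2"
    and "P = e1 * ut^2" and "Q = e1 * ux^2" and "W = e1 * (v * u^2)"
  note monomials = D_def X_def Y_def Z_def M_def K_def P_def Q_def W_def
  have bounds: "- X \<le> W/8 + Q/8" "- Y \<le> Q/16 + 4 * M" "4 * M + Z \<le> K"
    using cross_V cross_a damping unfolding monomials by (simp_all add: algebra_simps)
  have nonneg: "0 \<le> Z" "0 \<le> P" "0 \<le> Q" "0 \<le> W"
    using v a e1 unfolding monomials by simp_all
  have lhs: "- dpsi * (ux^2 + ut^2) / 2 - psi * v * u * ux - psi * a * ut * ux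
      - e1/4 * v * u^2 + e1/4 * ut^2 - e1/4 * ux^2 - k * a * ut^2
    = - D/2 - X - Y - W/4 + P/4 - Q/4 - K"
    unfolding monomials by (simp add: algebra_simps)
  have rhs: "- e1/16 * (ut^2 + ux^2 + v * u^2) = - (P + Q + W) / 16"
    unfolding monomials by (simp add: algebra_simps)
  from dpsi show ?thesis
  proof
    assume "dpsi = e1"
    then have "D = Q + P"
      unfolding monomials by (simp add: algebra_simps)
    then show ?thesis
      unfolding lhs rhs using bounds nonneg by (simp add: field_simps)
  next
    assume "dpsi = 0 \<and> e1 \<le> a"
    then have "D = 0" "P \<le> Z"
      unfolding monomials by (simp_all add: mult_right_mono)
    then show ?thesis
      unfolding lhs rhs using bounds nonneg by (simp add: field_simps)
  qed
qed

lemma density_pointwise_bound: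
  fixes ut ux u psi a v e1 L A Vmax k :: real
  assumes psi: "\<bar>psi\<bar> \<le> L * e1" and v: "0 < v" "v \<le> Vmax" and a: "0 \<le> a" "a \<le> A"
    and k: "0 \<le> k" and e1: "0 < e1"
  shows "ut * psi * ux + e1/4 * (ut * u) + e1/4/2 * (a * u^2) + k * (ut^2 + ux^2 + v * u^2) / 2
    \<le> (L * e1 + e1 * (1 + A) + k * (1 + Vmax)) * (u^2 + ux^2 + ut^2)"
proof -
  define S where "S = u^2 + ux^2 + ut^2"
  have "0 \<le> S"
    unfolding S_def by simp
  have "ut * psi * ux \<le> \<bar>psi\<bar> * (\<bar>ut\<bar> * \<bar>ux\<bar>)"
    using abs_ge_self[of "ut * psi * ux"] by (simp add: abs_mult ac_simps)
  also have "\<dots> \<le> L * e1 * (\<bar>ut\<bar> * \<bar>ux\<bar>)"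
    using psi by (intro mult_right_mono) auto
  also have "\<dots> \<le> L * e1 * S"
  proof (rule mult_left_mono)
    show "\<bar>ut\<bar> * \<bar>ux\<bar> \<le> S"
      using mult_le_young[of 1 "\<bar>ut\<bar>" "\<bar>ux\<bar>", simplified] zero_le_power2[of u] zero_le_power2[of ux]
        zero_le_power2[of ut]
      unfolding S_def by linarith
  qed (use psi in auto)
  finally have term1: "ut * psi * ux \<le> L * e1 * S" .
  have "ut * u \<le> S"
    using mult_le_young[of 1 ut u, simplified] zero_le_power2[of ux] zero_le_power2[of u]
      zero_le_power2[of ut]
    unfolding S_def by linarith
  then have "e1/4 * (ut * u) \<le> e1/4 * S"
    using e1 by (simp add: mult_left_mono)
  also have "\<dots> \<le> e1 * S"
    using e1 \<open>0 \<le> S\<close> by (simp add: mult_right_mono)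
  finally have term2: "e1/4 * (ut * u) \<le> e1 * S" .
  have "a * u^2 \<le> A * S"
    using mult_mono[OF a(2), of "u^2" S] a unfolding S_def by simp
  then have "e1/4/2 * (a * u^2) \<le> e1/8 * (A * S)"
    using e1 by (simp add: mult_left_mono)
  also have "\<dots> \<le> e1 * A * S"
    using e1 a \<open>0 \<le> S\<close> by (simp add: mult_right_mono)
  finally have term3: "e1/4/2 * (a * u^2) \<le> e1 * A * S" .
  have "v * u^2 \<le> Vmax * S"
    using mult_mono[OF v(2), of "u^2" S] v unfolding S_def by simp
  moreover have "ut^2 + ux^2 \<le> S" "0 \<le> Vmax * S" "(1 + Vmax) * S = S + Vmax * S"
    using v \<open>0 \<le> S\<close> unfolding S_def by (simp_all add: algebra_simps)
  ultimately have "ut^2 + ux^2 + v * u^2 \<le> (1 + Vmax) * S"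
    by linarith
  moreover have "0 \<le> k * (ut^2 + ux^2 + v * u^2)"
    using k v by simp
  ultimately have term4: "k * (ut^2 + ux^2 + v * u^2) / 2 \<le> k * (1 + Vmax) * S"
    using mult_left_mono[OF _ k] by (fastforce simp: mult.assoc)
  have "(L * e1 + e1 * (1 + A) + k * (1 + Vmax)) * S
      = L * e1 * S + e1 * S + e1 * A * S + k * (1 + Vmax) * S"
    by (simp add: algebra_simps)
  then show ?thesis
    using term1 term2 term3 term4 unfolding S_def[symmetric] by linarith
qed

lemma phi_eq_div_max: "0 < L \<Longrightarrow> phi L e1 x = L * e1 / max L \<bar>x\<bar>"
  by (auto simp: phi_def max_def)

lemma continuous_on_phi [continuous_intros]:
  "0 < L \<Longrightarrow> continuous_on S f \<Longrightarrow> continuous_on S (\<lambda>p. phi L e1 (f p))"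
  by (simp add: phi_eq_div_max) (intro continuous_intros, auto simp: max_def)

lemma abs_phi_mult_le: "0 < L \<Longrightarrow> 0 < e1 \<Longrightarrow> \<bar>phi L e1 x * x\<bar> \<le> L * e1"
  by (auto simp: phi_def abs_mult mult_right_mono)

lemma phi_mult_has_real_derivative:
  assumes "0 < L" and "\<bar>x\<bar> \<noteq> L"
  shows "((\<lambda>x. phi L e1 x * x) has_real_derivative (if \<bar>x\<bar> < L then e1 else 0)) (at x)"
proof -
  consider "\<bar>x\<bar> < L" | "L < x" | "x < -L"
    using assms by linarith
  then show ?thesis
  proof cases
    case 1
    have "((\<lambda>x. e1 * x) has_real_derivative e1) (at x)"
      by (auto intro!: derivative_eq_intros)
    then have "((\<lambda>x. phi L e1 x * x) has_real_derivative e1) (at x)"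
      by (rule has_field_derivative_transform_within_open[where S="{-L<..<L}"])
        (use 1 in \<open>auto simp: phi_def\<close>)
    then show ?thesis
      using 1 by simp
  next
    case 2
    have "((\<lambda>x. L * e1) has_real_derivative 0) (at x)"
      by simp
    then have "((\<lambda>x. phi L e1 x * x) has_real_derivative 0) (at x)"
      by (rule has_field_derivative_transform_within_open[where S="{L<..}"])
        (use 2 assms in \<open>auto simp: phi_def\<close>)
    then show ?thesis
      using 2 assms(1) by (simp add: abs_if)
  next
    case 3
    have "((\<lambda>x. - (L * e1)) has_real_derivative 0) (at x)"
      by simp
    then have "((\<lambda>x. phi L e1 x * x) has_real_derivative 0) (at x)"
      by (rule has_field_derivative_transform_within_open[where S="{..<-L}"])
        (use 3 assms in \<open>auto simp: phi_def\<close>)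
    then show ?thesis
      using 3 assms(1) by (simp add: abs_if)
  qed
qed

section \<open>Energy and finite speed of propagation\<close>

locale damped_wave =
  fixes V a :: "real \<Rightarrow> real" and u ut ux utt utx uxt uxx :: "real \<Rightarrow> real \<Rightarrow> real"
  assumes ut: "\<And>t x. ((\<lambda>s. u s x) has_real_derivative ut t x) (at t)"
    and ux: "\<And>t x. ((\<lambda>y. u t y) has_real_derivative ux t x) (at x)"
    and utt: "\<And>t x. ((\<lambda>s. ut s x) has_real_derivative utt t x) (at t)"
    and utx: "\<And>t x. ((\<lambda>y. ut t y) has_real_derivative utx t x) (at x)"
    and uxt: "\<And>t x. ((\<lambda>s. ux s x) has_real_derivative uxt t x) (at t)"
    and uxx: "\<And>t x. ((\<lambda>y. ux t y) has_real_derivative uxx t x) (at x)"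
    and cont_u: "continuous_on UNIV (\<lambda>(t,x). u t x)"
    and cont_ut: "continuous_on UNIV (\<lambda>(t,x). ut t x)"
    and cont_ux: "continuous_on UNIV (\<lambda>(t,x). ux t x)"
    and cont_utt: "continuous_on UNIV (\<lambda>(t,x). utt t x)"
    and cont_utx: "continuous_on UNIV (\<lambda>(t,x). utx t x)"
    and cont_uxt: "continuous_on UNIV (\<lambda>(t,x). uxt t x)"
    and cont_uxx: "continuous_on UNIV (\<lambda>(t,x). uxx t x)"
    and equation: "\<And>t x. utt t x - uxx t x + V x * u t x + a x * ut t x = 0"
    and cont_V: "continuous_on UNIV V" and cont_a: "continuous_on UNIV a"
    and V_pos: "\<And>x. 0 < V x" and a_nonneg: "\<And>x. 0 \<le> a x"
begin

lemmas continuous_on_u [continuous_intros] = continuous_on_compose_curried[OF cont_u]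
lemmas continuous_on_ut [continuous_intros] = continuous_on_compose_curried[OF cont_ut]
lemmas continuous_on_ux [continuous_intros] = continuous_on_compose_curried[OF cont_ux]
lemmas continuous_on_utt [continuous_intros] = continuous_on_compose_curried[OF cont_utt]
lemmas continuous_on_utx [continuous_intros] = continuous_on_compose_curried[OF cont_utx]
lemmas continuous_on_uxt [continuous_intros] = continuous_on_compose_curried[OF cont_uxt]
lemmas continuous_on_uxx [continuous_intros] = continuous_on_compose_curried[OF cont_uxx]
lemmas continuous_on_V [continuous_intros] = continuous_on_compose2[OF cont_V _ subset_UNIV]
lemmas continuous_on_a [continuous_intros] = continuous_on_compose2[OF cont_a _ subset_UNIV]

lemma utx_eq_uxt: "utx t x = uxt t x"
  using mixed_partials_eq[OF ut ux utx uxt cont_ux cont_uxt] .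

lemma deriv_u: "deriv (u t) = ux t"
  using ux by (auto intro: DERIV_imp_deriv)

definition energy_density :: "real \<Rightarrow> real \<Rightarrow> real" where
  "energy_density t x = (ut t x)^2 + (ux t x)^2 + V x * (u t x)^2"

lemma continuous_on_energy_density [continuous_intros]:
  "continuous_on S f \<Longrightarrow> continuous_on S g \<Longrightarrow> continuous_on S (\<lambda>p. energy_density (f p) (g p))"
  unfolding energy_density_def by (intro continuous_intros)

lemma energy_density_nonneg: "0 \<le> energy_density t x"
  using V_pos[of x] by (simp add: energy_density_def)

lemma energy_density_eq_0_iff:
  "energy_density t x = 0 \<longleftrightarrow> ut t x = 0 \<and> ux t x = 0 \<and> u t x = 0"
  using V_pos[of x] by (auto simp: energy_density_def add_nonneg_eq_0_iff)

lemma abs_energy_flux_le: "\<bar>2 * ut t x * ux t x\<bar> \<le> energy_density t x"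
proof -
  have "\<bar>2 * ut t x * ux t x\<bar> \<le> (ut t x)^2 + (ux t x)^2"
    using mult_le_young[of 1 "\<bar>ut t x\<bar>" "\<bar>ux t x\<bar>"] by (simp add: abs_mult)
  moreover have "0 \<le> V x * (u t x)^2"
    using V_pos[of x] by simp
  ultimately show ?thesis
    unfolding energy_density_def by linarith
qed

lemma energy_density_has_derivative:
  "((\<lambda>t. energy_density t x) has_real_derivative
     2 * (utx t x * ux t x + ut t x * uxx t x) - 2 * a x * (ut t x)^2) (at t)"
proof -
  have "((\<lambda>t. energy_density t x) has_real_derivative
      2 * (ut t x * utt t x + ux t x * uxt t x + V x * u t x * ut t x)) (at t)"
    unfolding energy_density_def
    by (auto intro!: derivative_eq_intros ut utt uxt simp: algebra_simps)
  moreover have "utt t x = uxx t x - V x * u t x - a x * ut t x"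
    using equation[of t x] by linarith
  ultimately show ?thesis
    by (simp add: utx_eq_uxt power2_eq_square algebra_simps)
qed

text \<open>
  The weight \<open>cone_weight r m\<close> shrinks at unit speed, as fast as energy can propagate, so the
  weighted energy on the cone over \<open>[m - r, m + r]\<close> is nonincreasing.
\<close>

lemma weighted_energy_nonincreasing:
  assumes "0 \<le> s" "0 \<le> r"
  shows "integral {m-r..m+r} (\<lambda>x. cone_weight r m s x * energy_density s x)
    \<le> integral {m-r..m+r} (\<lambda>x. cone_weight r m 0 x * energy_density 0 x)"
proof -
  define w where "w = cone_weight r m"
  define dw where "dw \<tau> x = 2 * max (r - \<tau> - \<bar>x - m\<bar>) 0" for \<tau> x
  define ft where "ft \<tau> x = - dw \<tau> x * energy_density \<tau> x
    + w \<tau> x * (2 * (utx \<tau> x * ux \<tau> x + ut \<tau> x * uxx \<tau> x) - 2 * a x * (ut \<tau> x)^2)" for \<tau> x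
  define Fl where "Fl \<tau> x = w \<tau> x * (2 * ut \<tau> x * ux \<tau> x)" for \<tau> x
  define Fl' where "Fl' \<tau> x = - dw \<tau> x * sgn (x - m) * (2 * ut \<tau> x * ux \<tau> x)
    + w \<tau> x * (2 * (utx \<tau> x * ux \<tau> x + ut \<tau> x * uxx \<tau> x))" for \<tau> x
  have f_deriv: "((\<lambda>\<tau>. w \<tau> x * energy_density \<tau> x) has_real_derivative ft \<tau> x) (at \<tau>)" for \<tau> x
    using DERIV_mult[OF cone_weight_has_derivative_time energy_density_has_derivative]
    by (simp add: w_def dw_def ft_def algebra_simps)
  have Fl_deriv: "(Fl \<tau> has_real_derivative Fl' \<tau> x) (at x)" if "x \<noteq> m" for \<tau> x
  proof -
    have "((\<lambda>x. 2 * ut \<tau> x * ux \<tau> x) has_real_derivative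
        2 * (utx \<tau> x * ux \<tau> x + ut \<tau> x * uxx \<tau> x)) (at x)"
      by (auto intro!: derivative_eq_intros utx uxx simp: algebra_simps)
    from DERIV_mult[OF cone_weight_has_derivative_space[OF that] this] show ?thesis
      unfolding Fl_def[abs_def] Fl'_def w_def dw_def by (simp add: algebra_simps)
  qed
  have ft_le: "ft \<tau> x \<le> Fl' \<tau> x + 0" for \<tau> x
  proof -
    have "sgn (x - m) * (2 * ut \<tau> x * ux \<tau> x) \<le> \<bar>2 * ut \<tau> x * ux \<tau> x\<bar>"
      by (auto simp: sgn_if)
    then have "sgn (x - m) * (2 * ut \<tau> x * ux \<tau> x) \<le> energy_density \<tau> x"
      using abs_energy_flux_le[of \<tau> x] by linarith
    then have "dw \<tau> x * (sgn (x - m) * (2 * ut \<tau> x * ux \<tau> x)) \<le> dw \<tau> x * energy_density \<tau> x"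
      by (rule mult_left_mono) (simp add: dw_def)
    then have "- dw \<tau> x * energy_density \<tau> x \<le> - dw \<tau> x * sgn (x - m) * (2 * ut \<tau> x * ux \<tau> x)"
      by (simp add: algebra_simps)
    moreover have "0 \<le> w \<tau> x * (2 * a x * (ut \<tau> x)^2)"
      using cone_weight_nonneg a_nonneg[of x] by (simp add: w_def)
    ultimately show ?thesis
      unfolding ft_def Fl'_def by (simp add: algebra_simps)
  qed
  have "integral {m-r..m+r} (\<lambda>x. w s x * energy_density s x)
      - integral {m-r..m+r} (\<lambda>x. w 0 x * energy_density 0 x)
    \<le> integral {0..s} (\<lambda>\<tau>. integral {m-r..m+r} (\<lambda>x. 0))"
    by (rule integral_increment_le_by_flux[where ft=ft and Fl=Fl and Fl'=Fl' and S="{m}"])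
      (use assms f_deriv Fl_deriv ft_le in \<open>auto simp: ft_def Fl_def w_def dw_def cone_weight_def
        case_prod_unfold intro!: continuous_intros\<close>)
  then show ?thesis
    by (simp add: w_def)
qed

lemma vanishes_in_cone:
  assumes s: "0 \<le> s" "s < r"
    and zero: "\<And>y. \<bar>y - m\<bar> \<le> r \<Longrightarrow> ut 0 y = 0 \<and> ux 0 y = 0 \<and> u 0 y = 0"
  shows "ut s m = 0 \<and> ux s m = 0 \<and> u s m = 0"
proof -
  define f where "f x = cone_weight r m s x * energy_density s x" for x
  have cont: "continuous_on {m-r..m+r} f"
    unfolding f_def by (intro continuous_intros)
  have nonneg: "0 \<le> f x" for x
    using cone_weight_nonneg energy_density_nonneg unfolding f_def by simp
  have "integral {m-r..m+r} f \<le> integral {m-r..m+r} (\<lambda>x. cone_weight r m 0 x * energy_density 0 x)"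
    unfolding f_def using s by (intro weighted_energy_nonincreasing) auto
  also have "\<dots> = integral {m-r..m+r} (\<lambda>_. 0)"
    by (rule integral_cong) (use zero in \<open>auto simp: energy_density_def abs_le_iff\<close>)
  finally have "integral {m-r..m+r} f \<le> 0"
    by simp
  moreover have "0 \<le> integral {m-r..m+r} f"
    by (rule integral_nonneg[OF integrable_continuous_real[OF cont]]) (use nonneg in auto)
  ultimately have "f m = 0"
    using integral_eq_0_iff[OF cont] nonneg s by auto
  moreover have "0 < cone_weight r m s m"
    using s by (simp add: cone_weight_def)
  ultimately show ?thesis
    by (simp add: f_def energy_density_eq_0_iff)
qed

lemma vanishes_outside_cone:
  assumes zero: "\<And>y. R0 < \<bar>y\<bar> \<Longrightarrow> ut 0 y = 0 \<and> ux 0 y = 0 \<and> u 0 y = 0"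
    and "0 \<le> s" and x: "R0 + s < \<bar>x\<bar>"
  shows "ut s x = 0 \<and> ux s x = 0 \<and> u s x = 0"
proof (rule vanishes_in_cone)
  define d where "d = (\<bar>x\<bar> - R0 - s) / 2"
  show "0 \<le> s" "s < s + d"
    using assms by (simp_all add: d_def)
  fix y
  assume "\<bar>y - x\<bar> \<le> s + d"
  moreover have "\<bar>x\<bar> \<le> \<bar>y\<bar> + \<bar>y - x\<bar>"
    using abs_triangle_ineq[of y "x - y"] by (simp add: abs_minus_commute)
  moreover have "\<bar>x\<bar> - s - d = R0 + d" "0 < d"
    using x by (simp_all add: d_def field_simps)
  ultimately have "R0 < \<bar>y\<bar>"
    by linarith
  then show "ut 0 y = 0 \<and> ux 0 y = 0 \<and> u 0 y = 0"
    by (rule zero)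
qed

lemma initial_data_vanish:
  assumes "smooth_compact (u 0)" "smooth_compact (ut 0)"
  obtains R0 where "0 \<le> R0" "\<And>y. R0 < \<bar>y\<bar> \<Longrightarrow> ut 0 y = 0 \<and> ux 0 y = 0 \<and> u 0 y = 0"
proof -
  obtain R1 R2 where R1: "\<And>x. R1 < \<bar>x\<bar> \<Longrightarrow> u 0 x = 0" and R2: "\<And>x. R2 < \<bar>x\<bar> \<Longrightarrow> ut 0 x = 0"
    using assms unfolding smooth_compact_def by metis
  define R0 where "R0 = max (max R1 R2) 0"
  have "ux 0 y = 0" if y: "R0 < \<bar>y\<bar>" for y
  proof -
    have "open {z. R0 < \<bar>z\<bar>}"
      by (intro open_Collect_less continuous_intros)
    then have "((\<lambda>z. u 0 z) has_real_derivative 0) (at y)"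
      by (intro has_field_derivative_transform_within_open[OF DERIV_const, where S="{z. R0 < \<bar>z\<bar>}"])
        (use y R1 in \<open>auto simp: R0_def\<close>)
    then show ?thesis
      using DERIV_unique[OF ux] by blast
  qed
  then show ?thesis
    using R1 R2 that[of R0] by (auto simp: R0_def)
qed

lemma energy_eq_integral:
  assumes vanish: "\<And>x. R \<le> \<bar>x\<bar> \<Longrightarrow> ut s x = 0 \<and> ux s x = 0 \<and> u s x = 0"
  shows "energy V u ut ux s = integral {-R..R} (energy_density s) / 2"
proof -
  have "(sqrt (V x) * u s x)^2 = V x * (u s x)^2" for x
    using V_pos[of x] by (simp add: power_mult_distrib)
  then have "2 * energy V u ut ux s
      = (LINT x|lborel. (ut s x)^2) + (LINT x|lborel. (ux s x)^2) + (LINT x|lborel. V x * (u s x)^2)"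
    by (simp add: energy_def L2sq_def)
  also have "\<dots> = integral {-R..R} (\<lambda>x. (ut s x)^2) + integral {-R..R} (\<lambda>x. (ux s x)^2)
      + integral {-R..R} (\<lambda>x. V x * (u s x)^2)"
    by (intro arg_cong2[where f="(+)"] lebesgue_integral_eq_integral_if_vanishing)
      (use vanish in \<open>auto intro!: continuous_intros\<close>)
  also have "\<dots> = integral {-R..R} (energy_density s)"
    unfolding energy_density_def[abs_def]
    by (intro integral_unique[symmetric] has_integral_add has_integral_integral_continuous continuous_intros)
  finally show ?thesis
    by simp
qed

lemma set_integral_energy_eq:
  assumes vanish: "\<And>s x. s \<in> {0..t} \<Longrightarrow> R \<le> \<bar>x\<bar> \<Longrightarrow> ut s x = 0 \<and> ux s x = 0 \<and> u s x = 0"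
  shows "(LINT s:{0..t}|lborel. energy V u ut ux s)
    = integral {0..t} (\<lambda>s. integral {-R..R} (energy_density s)) / 2"
proof -
  have "continuous_on UNIV (\<lambda>s. integral (cbox (-R) R) (energy_density s))"
    by (rule integral_continuous_on_param) (auto simp: case_prod_unfold intro!: continuous_intros)
  then have "continuous_on {0..t} (\<lambda>s. integral {-R..R} (energy_density s) / 2)"
    by (auto simp: cbox_interval intro: continuous_on_subset intro!: continuous_intros)
  then have "set_integrable lborel {0..t} (\<lambda>s. integral {-R..R} (energy_density s) / 2)"
    unfolding set_integrable_def by (intro borel_integrable_compact) auto
  moreover have "energy V u ut ux s = integral {-R..R} (energy_density s) / 2" if "s \<in> {0..t}" for s
    using vanish[OF that] by (rule energy_eq_integral)
  then have "(LINT s:{0..t}|lborel. energy V u ut ux s)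
      = (LINT s:{0..t}|lborel. integral {-R..R} (energy_density s) / 2)"
    by (intro set_lebesgue_integral_cong) auto
  ultimately show ?thesis
    using set_borel_integral_eq_integral(2) by fastforce
qed

end

lemma damped_wave_if_is_solution:
  assumes "is_solution V a u0 u1 u ut ux" and "continuous_on UNIV V" "continuous_on UNIV a"
    and "\<And>x. 0 < V x" "\<And>x. 0 \<le> a x"
  obtains utt utx uxt uxx where "damped_wave V a u ut ux utt utx uxt uxx"
    and "u 0 = u0" and "ut 0 = u1"
  using assms unfolding is_solution_def
  by (elim exE conjE) (rule that, unfold damped_wave_def, auto simp: fun_eq_iff)

section \<open>The functional \<open>G\<^sub>k\<close>\<close>

locale Gk_estimate = damped_wave +
  fixes L e1 A Vmax k :: real
  assumes L_pos: "0 < L" and e1_pos: "0 < e1"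
    and a_ge: "\<And>x. L \<le> \<bar>x\<bar> \<Longrightarrow> e1 \<le> a x" and a_le: "\<And>x. a x \<le> A"
    and V_le: "\<And>x. V x \<le> Vmax" and small_V: "16 * L^2 * Vmax < 1"
    and k_ge: "4 * L^2 * e1 * A + 1 \<le> k"
begin

definition psi :: "real \<Rightarrow> real" where
  "psi x = phi L e1 x * x"

definition Gk_density :: "real \<Rightarrow> real \<Rightarrow> real" where
  "Gk_density t x = ut t x * psi x * ux t x + e1/4 * (ut t x * u t x)
     + e1/4/2 * (a x * (u t x)^2) + k * energy_density t x / 2"

definition Gk_density_dt :: "real \<Rightarrow> real \<Rightarrow> real" where
  "Gk_density_dt t x = utt t x * psi x * ux t x + ut t x * psi x * uxt t x
     + e1/4 * (utt t x * u t x + ut t x * ut t x) + e1/4/2 * (a x * (2 * u t x * ut t x))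
     + k * (2 * (utx t x * ux t x + ut t x * uxx t x) - 2 * a x * (ut t x)^2) / 2"

definition Gk_flux :: "real \<Rightarrow> real \<Rightarrow> real" where
  "Gk_flux t x = psi x * ((ux t x)^2 + (ut t x)^2) / 2 + e1/4 * (u t x * ux t x)
     + k * (ut t x * ux t x)"

definition Gk_flux_dx :: "real \<Rightarrow> real \<Rightarrow> real" where
  "Gk_flux_dx t x = (if \<bar>x\<bar> < L then e1 else 0) * ((ux t x)^2 + (ut t x)^2) / 2
     + psi x * (ux t x * uxx t x + ut t x * utx t x)
     + e1/4 * (ux t x * ux t x + u t x * uxx t x) + k * (utx t x * ux t x + ut t x * uxx t x)"

lemma A_nonneg: "0 \<le> A"
  using a_nonneg[of 0] a_le[of 0] by linarith

lemma k_pos: "0 < k"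
proof -
  have "0 \<le> 4 * L^2 * e1 * A"
    using A_nonneg e1_pos by simp
  then show ?thesis
    using k_ge by linarith
qed

lemma continuous_on_psi [continuous_intros]:
  "continuous_on S f \<Longrightarrow> continuous_on S (\<lambda>p. psi (f p))"
  unfolding psi_def using L_pos by (intro continuous_intros)

lemma Gk_density_has_derivative:
  "((\<lambda>t. Gk_density t x) has_real_derivative Gk_density_dt t x) (at t)"
  unfolding Gk_density_def[abs_def] Gk_density_dt_def
  by (auto intro!: derivative_eq_intros ut utt uxt ux energy_density_has_derivative
      simp: power2_eq_square field_simps)

lemma Gk_flux_has_derivative:
  assumes "\<bar>x\<bar> \<noteq> L"
  shows "(Gk_flux t has_real_derivative Gk_flux_dx t x) (at x)"
proof -
  have "(psi has_real_derivative (if \<bar>x\<bar> < L then e1 else 0)) (at x)"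
    unfolding psi_def[abs_def] using phi_mult_has_real_derivative[OF L_pos assms] .
  then show ?thesis
    unfolding Gk_flux_def[abs_def] Gk_flux_dx_def
    by (auto intro!: derivative_eq_intros ux uxx utx simp: power2_eq_square field_simps)
qed

lemma Gk_density_dt_le: "Gk_density_dt t x \<le> Gk_flux_dx t x - e1/16 * energy_density t x"
proof -
  have utt_eq: "utt t x = uxx t x - V x * u t x - a x * ut t x"
    using equation[of t x] by linarith
  have "Gk_density_dt t x - Gk_flux_dx t x
    = - (if \<bar>x\<bar> < L then e1 else 0) * ((ux t x)^2 + (ut t x)^2) / 2
      - psi x * V x * u t x * ux t x - psi x * a x * ut t x * ux t x
      - e1/4 * V x * (u t x)^2 + e1/4 * (ut t x)^2 - e1/4 * (ux t x)^2 - k * a x * (ut t x)^2"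
    unfolding Gk_density_dt_def Gk_flux_dx_def utx_eq_uxt utt_eq
    by (simp add: power2_eq_square field_simps)
  also have "\<dots> \<le> - e1/16 * energy_density t x"
    unfolding energy_density_def
    by (rule dissipation_pointwise[where L=L and A=A and Vmax=Vmax])
      (use abs_phi_mult_le[OF L_pos e1_pos] V_pos V_le small_V a_nonneg a_le k_ge e1_pos a_ge in
        \<open>auto simp: psi_def\<close>)
  finally show ?thesis
    by simp
qed

lemma integral_Gk_density_decrease:
  assumes "0 \<le> t" "0 < R"
    and vanish: "\<And>s x. s \<in> {0..t} \<Longrightarrow> R \<le> \<bar>x\<bar> \<Longrightarrow> ut s x = 0 \<and> ux s x = 0 \<and> u s x = 0"
  shows "integral {-R..R} (Gk_density t) - integral {-R..R} (Gk_density 0)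
    \<le> integral {0..t} (\<lambda>s. integral {-R..R} (\<lambda>x. - e1/16 * energy_density s x))"
proof (rule integral_increment_le_by_flux[where ft=Gk_density_dt and Fl=Gk_flux and S="{-L, L}"])
  show "Gk_density_dt s x \<le> Gk_flux_dx s x + - e1/16 * energy_density s x" for s x
    using Gk_density_dt_le by simp
  show "Gk_flux s (-R) = 0 \<and> Gk_flux s R = 0" if "s \<in> {0..t}" for s
    using vanish[OF that, of R] vanish[OF that, of "-R"] by (simp add: Gk_flux_def)
  show "(Gk_flux s has_real_derivative Gk_flux_dx s x) (at x)" if "x \<in> {-R<..<R} - {-L, L}" for s x
    using that by (intro Gk_flux_has_derivative) auto
qed (use assms Gk_density_has_derivative in \<open>auto simp: Gk_density_def Gk_density_dt_def Gk_flux_def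
  case_prod_unfold intro!: continuous_intros\<close>)

lemma Gk_eq_integral:
  assumes vanish: "\<And>x. R \<le> \<bar>x\<bar> \<Longrightarrow> ut t x = 0 \<and> ux t x = 0 \<and> u t x = 0"
  shows "Gk L e1 a V k u ut ux t = integral {-R..R} (Gk_density t)"
proof -
  have "Gk L e1 a V k u ut ux t = (LINT x|lborel. ut t x * psi x * ux t x)
      + e1/4 * (LINT x|lborel. ut t x * u t x) + e1/4/2 * (LINT x|lborel. a x * (u t x)^2)
      + k * energy V u ut ux t"
    by (simp add: Gk_def L2inner_def psi_def mult.assoc)
  also have "\<dots> = integral {-R..R} (\<lambda>x. ut t x * psi x * ux t x)
      + e1/4 * integral {-R..R} (\<lambda>x. ut t x * u t x) + e1/4/2 * integral {-R..R} (\<lambda>x. a x * (u t x)^2)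
      + k * integral {-R..R} (energy_density t) / 2"
    by (intro arg_cong2[where f="(+)"] arg_cong2[where f="(*)"] refl
        lebesgue_integral_eq_integral_if_vanishing)
      (use vanish energy_eq_integral[OF vanish] in \<open>auto intro!: continuous_intros\<close>)
  also have "\<dots> = integral {-R..R} (Gk_density t)"
    unfolding Gk_density_def[abs_def]
    by (intro integral_unique[symmetric] has_integral_add has_integral_mult_right has_integral_divide
        has_integral_integral_continuous continuous_intros)
  finally show ?thesis .
qed

lemma Gk_plus_energy_le_initial_density:
  assumes "0 \<le> t" and "0 \<le> R0" and "R0 + t < R"
    and zero: "\<And>y. R0 < \<bar>y\<bar> \<Longrightarrow> ut 0 y = 0 \<and> ux 0 y = 0 \<and> u 0 y = 0"
  shows "Gk L e1 a V k u ut ux t + e1/8 * (LINT s:{0..t}|lborel. energy V u ut ux s)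
    \<le> integral {-R..R} (Gk_density 0)"
proof -
  have vanish: "ut s x = 0 \<and> ux s x = 0 \<and> u s x = 0" if "s \<in> {0..t}" "R \<le> \<bar>x\<bar>" for s x
    by (rule vanishes_outside_cone[OF zero]) (use that assms in auto)
  have "integral {-R..R} (Gk_density t) - integral {-R..R} (Gk_density 0)
      \<le> integral {0..t} (\<lambda>s. integral {-R..R} (\<lambda>x. - e1/16 * energy_density s x))"
    by (rule integral_Gk_density_decrease) (use assms vanish in auto)
  also have "\<dots> = - e1/8 * (LINT s:{0..t}|lborel. energy V u ut ux s)"
    using set_integral_energy_eq[of t R] vanish by simp
  finally show ?thesis
    using Gk_eq_integral[of R t] vanish assms(1) by simp
qed

lemma integral_Gk_density_0_le:
  assumes vanish: "\<And>x. R \<le> \<bar>x\<bar> \<Longrightarrow> ut 0 x = 0 \<and> ux 0 x = 0 \<and> u 0 x = 0"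
  shows "integral {-R..R} (Gk_density 0)
    \<le> (L * e1 + e1 * (1 + A) + k * (1 + Vmax)) * (L2sq (u 0) + L2sq (ux 0) + L2sq (ut 0))"
proof -
  define C where "C = L * e1 + e1 * (1 + A) + k * (1 + Vmax)"
  have L2sq_eq: "L2sq (u 0) + L2sq (ux 0) + L2sq (ut 0)
      = integral {-R..R} (\<lambda>x. (u 0 x)^2) + integral {-R..R} (\<lambda>x. (ux 0 x)^2)
        + integral {-R..R} (\<lambda>x. (ut 0 x)^2)"
    unfolding L2sq_def
    by (intro arg_cong2[where f="(+)"] lebesgue_integral_eq_integral_if_vanishing)
      (use vanish in \<open>auto intro!: continuous_intros\<close>)
  have "(Gk_density 0 has_integral integral {-R..R} (Gk_density 0)) {-R..R}"
    unfolding Gk_density_def[abs_def] by (intro has_integral_integral_continuous continuous_intros) auto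
  moreover have "((\<lambda>x. C * ((u 0 x)^2 + (ux 0 x)^2 + (ut 0 x)^2)) has_integral
      C * (integral {-R..R} (\<lambda>x. (u 0 x)^2) + integral {-R..R} (\<lambda>x. (ux 0 x)^2)
        + integral {-R..R} (\<lambda>x. (ut 0 x)^2))) {-R..R}"
    by (intro has_integral_mult_right has_integral_add has_integral_integral_continuous
        continuous_intros)
  moreover have "Gk_density 0 x \<le> C * ((u 0 x)^2 + (ux 0 x)^2 + (ut 0 x)^2)" for x
    unfolding Gk_density_def energy_density_def C_def
    by (rule density_pointwise_bound)
      (use abs_phi_mult_le[OF L_pos e1_pos] V_pos V_le a_nonneg a_le k_pos e1_pos in
        \<open>auto simp: psi_def\<close>)
  ultimately show ?thesis
    unfolding C_def[symmetric] L2sq_eq by (rule has_integral_le)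
qed

lemma Gk_plus_energy_le_initial_norms:
  assumes "smooth_compact (u 0)" "smooth_compact (ut 0)" "0 \<le> t"
  shows "Gk L e1 a V k u ut ux t + e1/8 * (LINT s:{0..t}|lborel. energy V u ut ux s)
    \<le> (L * e1 + e1 * (1 + A) + k * (1 + Vmax)) * (L2sq (u 0) + L2sq (deriv (u 0)) + L2sq (ut 0))"
proof -
  obtain R0 where "0 \<le> R0" and zero: "\<And>y. R0 < \<bar>y\<bar> \<Longrightarrow> ut 0 y = 0 \<and> ux 0 y = 0 \<and> u 0 y = 0"
    using initial_data_vanish[OF assms(1,2)] by metis
  define R where "R = R0 + t + 1"
  have "Gk L e1 a V k u ut ux t + e1/8 * (LINT s:{0..t}|lborel. energy V u ut ux s)
      \<le> integral {-R..R} (Gk_density 0)"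
    by (rule Gk_plus_energy_le_initial_density[OF \<open>0 \<le> t\<close> \<open>0 \<le> R0\<close> _ zero]) (simp add: R_def)
  also have "\<dots> \<le> (L * e1 + e1 * (1 + A) + k * (1 + Vmax)) * (L2sq (u 0) + L2sq (ux 0) + L2sq (ut 0))"
    using zero \<open>0 \<le> t\<close> by (intro integral_Gk_density_0_le) (auto simp: R_def)
  finally show ?thesis
    by (simp add: deriv_u)
qed

end

lemma Gk_plus_energy_le_initial_norms_if_is_solution:
  assumes "is_solution V a u0 u1 u ut ux" "smooth_compact u0" "smooth_compact u1" "0 \<le> t"
    and "continuous_on UNIV V" "\<And>x. 0 < V x" "\<And>x. V x \<le> Vmax" "16 * L^2 * Vmax < 1"
    and "continuous_on UNIV a" "\<And>x. 0 \<le> a x" "\<And>x. a x \<le> A" "\<And>x. L \<le> \<bar>x\<bar> \<Longrightarrow> e1 \<le> a x"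
    and "0 < L" "0 < e1" "4 * L^2 * e1 * A + 1 \<le> k"
  shows "Gk L e1 a V k u ut ux t + e1/8 * (LINT s:{0..t}|lborel. energy V u ut ux s)
    \<le> (L * e1 + e1 * (1 + A) + k * (1 + Vmax)) * (L2sq u0 + L2sq (deriv u0) + L2sq u1)"
proof -
  obtain utt utx uxt uxx where wave: "damped_wave V a u ut ux utt utx uxt uxx"
    and "u 0 = u0" "ut 0 = u1"
    using damped_wave_if_is_solution assms(1,5,6,9,10) by metis
  interpret Gk_estimate V a u ut ux utt utx uxt uxx L e1 A Vmax k
    by (intro Gk_estimate.intro wave Gk_estimate_axioms.intro) (use assms in auto)
  show ?thesis
    using Gk_plus_energy_le_initial_norms assms(2-4) \<open>u 0 = u0\<close> \<open>ut 0 = u1\<close> by blast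
qed

lemma Gk_energy_estimate:
  fixes L e1 :: real and a V :: "real \<Rightarrow> real"
  assumes L: "0 < L" and "BC a" and a_nonneg: "\<forall>x. 0 \<le> a x" and e1: "0 < e1"
    and a_ge: "\<forall>x. \<bar>x\<bar> \<ge> L \<longrightarrow> a x \<ge> e1"
    and "BC1 V" and V_pos: "\<forall>x. 0 < V x" and V_deriv_sign: "\<forall>x. deriv V x * x \<le> 0"
    and "V 0 < 1 / (16 * L^2)"
  shows "\<exists>K \<ge> 2. \<forall>k \<ge> K. \<exists>\<eta>0 > 0. \<exists>C > 0.
    \<forall>u0 u1 u ut ux. smooth_compact u0 \<and> smooth_compact u1 \<and> is_solution V a u0 u1 u ut ux \<longrightarrow>
      (\<forall>t \<ge> 0. Gk L e1 a V k u ut ux t + \<eta>0 * (LINT s:{0..t}|lborel. energy V u ut ux s)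
        \<le> C * (L2sq u0 + L2sq (deriv u0) + L2sq u1
          + (LINT s:{0..t}|lborel. (LINT x|lborel. a x * (u s x)^2))))"
proof -
  obtain A where a_le: "\<And>x. a x \<le> A"
    using \<open>BC a\<close> unfolding BC_def bounded_real by (meson abs_le_D1 rangeI)
  then have "0 \<le> A"
    using a_nonneg order_trans by blast
  have "(V has_real_derivative deriv V x) (at x)" for x
    using \<open>BC1 V\<close> by (simp add: BC1_def differentiable_on_def DERIV_deriv_iff_real_differentiable)
  then have V_le: "V x \<le> V 0" for x
    by (rule le_value_at_0_if_deriv_mult_nonpos) (use V_deriv_sign in auto)
  have small_V: "16 * L^2 * V 0 < 1"
    using \<open>V 0 < 1 / (16 * L^2)\<close> L by (simp add: field_simps)
  have damping_nonneg: "0 \<le> (LINT s:{0..t}|lborel. (LINT x|lborel. a x * (u s x)^2))" for t u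
    using a_nonneg by (auto simp: set_lebesgue_integral_def intro!: integral_nonneg_AE AE_I2)
  show ?thesis
  proof (rule exI[of _ "max 2 (4 * L^2 * e1 * A + 1)"], intro conjI allI impI)
    fix k
    assume k: "max 2 (4 * L^2 * e1 * A + 1) \<le> k"
    define C where "C = L * e1 + e1 * (1 + A) + k * (1 + V 0)"
    have "0 < L * e1" "0 < e1 * (1 + A)" "0 \<le> k * (1 + V 0)"
      using L e1 \<open>0 \<le> A\<close> k V_pos[rule_format, of 0] by simp_all
    then have "0 < C"
      unfolding C_def by linarith
    have "Gk L e1 a V k u ut ux t + e1/8 * (LINT s:{0..t}|lborel. energy V u ut ux s)
        \<le> C * (L2sq u0 + L2sq (deriv u0) + L2sq u1
          + (LINT s:{0..t}|lborel. (LINT x|lborel. a x * (u s x)^2)))"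
      if sol: "smooth_compact u0 \<and> smooth_compact u1 \<and> is_solution V a u0 u1 u ut ux" and "0 \<le> t"
      for u0 u1 u ut ux t
    proof -
      have "Gk L e1 a V k u ut ux t + e1/8 * (LINT s:{0..t}|lborel. energy V u ut ux s)
          \<le> C * (L2sq u0 + L2sq (deriv u0) + L2sq u1)"
        unfolding C_def
        by (rule Gk_plus_energy_le_initial_norms_if_is_solution)
          (use sol \<open>0 \<le> t\<close> \<open>BC a\<close> \<open>BC1 V\<close> V_le small_V a_nonneg a_le a_ge L e1 V_pos k in
            \<open>auto simp: BC_def BC1_def\<close>)
      also have "\<dots> \<le> C * (L2sq u0 + L2sq (deriv u0) + L2sq u1
          + (LINT s:{0..t}|lborel. (LINT x|lborel. a x * (u s x)^2)))"
        using damping_nonneg \<open>0 < C\<close> by (intro mult_left_mono) auto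
      finally show ?thesis .
    qed
    then show "\<exists>\<eta>0 > 0. \<exists>C > 0.
      \<forall>u0 u1 u ut ux. smooth_compact u0 \<and> smooth_compact u1 \<and> is_solution V a u0 u1 u ut ux \<longrightarrow>
        (\<forall>t \<ge> 0. Gk L e1 a V k u ut ux t + \<eta>0 * (LINT s:{0..t}|lborel. energy V u ut ux s)
          \<le> C * (L2sq u0 + L2sq (deriv u0) + L2sq u1
            + (LINT s:{0..t}|lborel. (LINT x|lborel. a x * (u s x)^2))))"
      using e1 \<open>0 < C\<close> by (intro exI[of _ "e1/8"] conjI exI[of _ C]; simp)
  qed simp
qed

theorem lemma2p3:
  shows "\<exists>Cstar :: real \<Rightarrow> real. \<forall>L > 0. Cstar L > 0 \<and>
    (\<forall>(\<epsilon>1::real) (a::real \<Rightarrow> real) (V::real \<Rightarrow> real).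
      BC a \<and> (\<forall>x. a x \<ge> 0) \<and> \<epsilon>1 > 0 \<and> (\<forall>x. \<bar>x\<bar> \<ge> L \<longrightarrow> a x \<ge> \<epsilon>1) \<and>
      BC1 V \<and> (\<forall>x. V x > 0) \<and> (\<forall>x. deriv V x * x \<le> 0) \<and>
      V 0 < 1 / (4 * Cstar L)
      \<longrightarrow> (\<exists>K \<ge> 2. \<forall>k \<ge> K. \<exists>\<eta>0 > 0. \<exists>C > 0.
            \<forall>u0 u1 u ut ux. smooth_compact u0 \<and> smooth_compact u1 \<and>
              is_solution V a u0 u1 u ut ux \<longrightarrow>
              (\<forall>t \<ge> 0.
                 Gk L \<epsilon>1 a V k u ut ux t + \<eta>0 * (LINT s:{0..t}|lborel. energy V u ut ux s)
                 \<le> C * (L2sq u0 + L2sq (deriv u0) + L2sq u1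
                        + (LINT s:{0..t}|lborel. (LINT x|lborel. a x * (u s x)^2))))))"
  by (intro exI[of _ "\<lambda>L. 4 * L^2"] allI impI conjI) (auto intro!: Gk_energy_estimate)

end
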